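(* Let $\mu_m$ be the distribution on $\{0,1\}^m\times\{0,1\}^m$ under which each of the $2m$ bits is independently equal to 1 with probability $\sqrt{1/2}$ and to 0 with probability $1-\sqrt{1/2}$. Then $disc_{\mu_m}(IP_m)\le O(2^{-m/4})$.
   Context: $IP_m(x,y)=\bigoplus_{i=1}^m(x_i\wedge y_i)$. For a distribution $\mu$ on $\{0,1\}^m\times\{0,1\}^m$ and $f$ with range $\{0,1\}$, $disc_\mu(f)=\max_R|\mu(R\cap f^{-1}(0))-\mu(R\cap f^{-1}(1))|$, where $R$ ranges over rectangles $A\times B$ with $A,B\subseteq\{0,1\}^m$. *)

theory Defs
  imports Complex_Main
begin

text \<open>The Boolean cube {0,1}^m, bits represented as booleans (True = 1).\<close>
definition cube :: "nat \<Rightarrow> bool list set" where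
  "cube m = {xs. length xs = m}"

definition IP :: "nat \<Rightarrow> bool list \<Rightarrow> bool list \<Rightarrow> nat" where
  "IP m x y = (\<Sum>i<m. if x ! i \<and> y ! i then 1 else 0) mod 2"

definition bitp :: "bool \<Rightarrow> real" where
  "bitp b = (if b then sqrt (1/2) else 1 - sqrt (1/2))"

definition mu :: "nat \<Rightarrow> bool list \<times> bool list \<Rightarrow> real" where
  "mu m p = (\<Prod>i<m. bitp (fst p ! i) * bitp (snd p ! i))"

definition mu_set :: "nat \<Rightarrow> (bool list \<times> bool list) set \<Rightarrow> real" where
  "mu_set m S = (\<Sum>p \<in> S \<inter> (cube m \<times> cube m). mu m p)"

definition disc :: "nat \<Rightarrow> (bool list \<Rightarrow> bool list \<Rightarrow> nat) \<Rightarrow> real" where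
  "disc m f = Max {\<bar>mu_set m ((A \<times> B) \<inter> {p. f (fst p) (snd p) = 0})
                   - mu_set m ((A \<times> B) \<inter> {p. f (fst p) (snd p) = 1})\<bar>
                  | A B. A \<subseteq> cube m \<and> B \<subseteq> cube m}"

end

theory Submission
  imports Defs "HOL-Analysis.Convex"
begin

text \<open>Writing \<open>\<mu>\<^sub>m(x,y) = w(x) w(y)\<close> for the product weight \<open>w\<close> of a single string, the bias of
  \<open>IP\<^sub>m\<close> on a rectangle \<open>A \<times> B\<close> is the bilinear form \<open>\<Sum>\<^sub>x\<^sub>\<in>\<^sub>A \<Sum>\<^sub>y\<^sub>\<in>\<^sub>B w(x) w(y) (-1)\<^bsup>IP(x,y)\<^esup>\<close>.
  Cauchy-Schwarz in \<open>x\<close> and the orthogonality of the Hadamard matrix \<open>(-1)\<^bsup>IP(x,y)\<^esup>\<close> bound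
  its square by \<open>2\<^sup>m (\<Sum>\<^sub>x w(x)\<^sup>2)\<^sup>2 = (2 (2 - 2p)\<^sup>2)\<^sup>m\<close> with \<open>p = \<surd>(1/2)\<close>, and
  \<open>2 (2 - 2p)\<^sup>2 = 12 - 16p \<le> p\<close>. Hence every rectangle has bias at most \<open>p\<^bsup>m/2\<^esup> = 2\<^bsup>-m/4\<^esup>\<close>.\<close>

lemma cube_Suc: "cube (Suc m) = (\<lambda>(a, x). a # x) ` (UNIV \<times> cube m)"
  by (auto simp: cube_def length_Suc_conv)

lemma finite_cube: "finite (cube m)"
  using finite_lists_length_eq[of "UNIV :: bool set" m] by (simp add: cube_def)

lemma sum_cube_prod:
  fixes g :: "nat \<Rightarrow> bool \<Rightarrow> 'a :: comm_semiring_1"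
  shows "(\<Sum>x\<in>cube m. \<Prod>i<m. g i (x ! i)) = (\<Prod>i<m. g i True + g i False)"
proof (induction m arbitrary: g)
  case 0
  then show ?case by (simp add: cube_def)
next
  case (Suc m)
  have inj: "inj_on (\<lambda>(a, x). a # x) (UNIV \<times> cube m)" by (auto simp: inj_on_def)
  have "(\<Sum>x\<in>cube (Suc m). \<Prod>i<Suc m. g i (x ! i))
      = (\<Sum>(a, x)\<in>UNIV \<times> cube m. \<Prod>i<Suc m. g i ((a # x) ! i))"
    unfolding cube_Suc by (subst sum.reindex[OF inj]) (simp add: case_prod_unfold)
  also have "\<dots> = (\<Sum>a\<in>UNIV. \<Sum>x\<in>cube m. g 0 a * (\<Prod>i<m. g (Suc i) (x ! i)))"
    unfolding sum.cartesian_product[symmetric]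
    by (simp add: prod.lessThan_Suc_shift del: prod.lessThan_Suc)
  also have "\<dots> = (\<Sum>a\<in>UNIV. g 0 a * (\<Prod>i<m. g (Suc i) True + g (Suc i) False))"
    by (simp add: sum_distrib_left[symmetric] Suc.IH[of "\<lambda>i. g (Suc i)"])
  also have "\<dots> = (\<Prod>i<Suc m. g i True + g i False)"
    by (simp add: prod.lessThan_Suc_shift UNIV_bool distrib_right add_ac del: prod.lessThan_Suc)
  finally show ?case .
qed

definition cube_weight :: "nat \<Rightarrow> bool list \<Rightarrow> real" where
  "cube_weight m x = (\<Prod>i<m. bitp (x ! i))"

definition ip_sign :: "nat \<Rightarrow> bool list \<Rightarrow> bool list \<Rightarrow> real" where
  "ip_sign m x y = (-1) ^ IP m x y"

lemma mu_eq_cube_weight: "mu m (x, y) = cube_weight m x * cube_weight m y"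
  unfolding mu_def cube_weight_def by (simp add: prod.distrib)

lemma sum_cube_weight_square: "(\<Sum>x\<in>cube m. (cube_weight m x)\<^sup>2) = (2 - 2 * sqrt (1/2)) ^ m"
proof -
  have "(\<Sum>x\<in>cube m. (cube_weight m x)\<^sup>2) = (\<Prod>i<m. (bitp True)\<^sup>2 + (bitp False)\<^sup>2)"
    unfolding cube_weight_def prod_power_distrib by (rule sum_cube_prod)
  also have "(bitp True)\<^sup>2 + (bitp False)\<^sup>2 = 2 - 2 * sqrt (1/2)"
    by (simp add: bitp_def power2_diff)
  finally show ?thesis by simp
qed

lemma ip_sign_eq_prod: "ip_sign m x y = (\<Prod>i<m. if x ! i \<and> y ! i then -1 else 1)"
proof -
  have "ip_sign m x y = (-1) ^ (\<Sum>i<m. if x ! i \<and> y ! i then 1 else 0 :: nat)"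
    unfolding ip_sign_def IP_def by (simp add: minus_one_power_iff)
  also have "\<dots> = (\<Prod>i<m. if x ! i \<and> y ! i then -1 else 1)"
    by (subst power_sum) (rule prod.cong; simp)
  finally show ?thesis .
qed

lemma ip_sign_orthogonal:
  assumes "y \<in> cube m" "z \<in> cube m"
  shows "(\<Sum>x\<in>cube m. ip_sign m x y * ip_sign m x z) = (if y = z then 2 ^ m else 0)"
proof -
  have "(\<Sum>x\<in>cube m. ip_sign m x y * ip_sign m x z)
      = (\<Sum>x\<in>cube m. \<Prod>i<m. (if x ! i \<and> y ! i then -1 else 1) * (if x ! i \<and> z ! i then -1 else 1))"
    by (simp add: ip_sign_eq_prod prod.distrib)
  also have "\<dots> = (\<Prod>i<m. if y ! i = z ! i then 2 else 0)"
    by (subst sum_cube_prod) (rule prod.cong; auto)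
  also have "\<dots> = (if y = z then 2 ^ m else 0)"
  proof (cases "y = z")
    case False
    with assms obtain i where "i < m" "y ! i \<noteq> z ! i"
      using nth_equalityI[of y z] by (auto simp: cube_def)
    with False show ?thesis by (auto intro!: prod_zero)
  qed simp
  finally show ?thesis .
qed

lemma weighted_Lindsey:
  fixes f :: "'a \<Rightarrow> 'b \<Rightarrow> real"
  assumes "finite X" "finite Y" "A \<subseteq> X" "B \<subseteq> Y"
    and orth: "\<And>y z. y \<in> Y \<Longrightarrow> z \<in> Y \<Longrightarrow> (\<Sum>x\<in>X. f x y * f x z) = (if y = z then N else 0)"
  shows "(\<Sum>x\<in>A. \<Sum>y\<in>B. u x * v y * f x y)\<^sup>2 \<le> (\<Sum>x\<in>X. (u x)\<^sup>2) * N * (\<Sum>y\<in>Y. (v y)\<^sup>2)"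
proof (cases "Y = {}")
  case True
  with assms show ?thesis by simp
next
  case False
  then obtain y where "y \<in> Y" by blast
  have "N = (\<Sum>x\<in>X. (f x y)\<^sup>2)" using orth[OF \<open>y \<in> Y\<close> \<open>y \<in> Y\<close>] by (simp add: power2_eq_square)
  then have "N \<ge> 0" by (simp add: sum_nonneg)
  have fin: "finite A" "finite B" using assms finite_subset by blast+
  define g where "g x = (\<Sum>y\<in>B. v y * f x y)" for x
  have "(\<Sum>x\<in>X. (g x)\<^sup>2) = (\<Sum>x\<in>X. \<Sum>y\<in>B. \<Sum>z\<in>B. v y * v z * (f x y * f x z))"
    unfolding g_def power2_eq_square sum_product by (simp add: mult_ac)
  also have "\<dots> = (\<Sum>y\<in>B. \<Sum>z\<in>B. v y * v z * (\<Sum>x\<in>X. f x y * f x z))"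
    unfolding sum_distrib_left by (subst sum.swap) (simp add: sum.swap[of _ X])
  also have "\<dots> = N * (\<Sum>y\<in>B. (v y)\<^sup>2)"
    using \<open>B \<subseteq> Y\<close> fin
    by (simp add: subsetD orth sum_distrib_left power2_eq_square mult_ac if_distrib cong: if_cong)
  finally have g_square: "(\<Sum>x\<in>X. (g x)\<^sup>2) = N * (\<Sum>y\<in>B. (v y)\<^sup>2)" .
  have "(\<Sum>x\<in>A. \<Sum>y\<in>B. u x * v y * f x y)\<^sup>2 = (\<Sum>x\<in>A. u x * g x)\<^sup>2"
    by (simp add: g_def sum_distrib_left mult.assoc)
  also have "\<dots> \<le> (\<Sum>x\<in>A. (u x)\<^sup>2) * (\<Sum>x\<in>A. (g x)\<^sup>2)"
    by (rule Cauchy_Schwarz_ineq_sum)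
  also have "\<dots> \<le> (\<Sum>x\<in>X. (u x)\<^sup>2) * (\<Sum>x\<in>X. (g x)\<^sup>2)"
    using assms by (intro mult_mono sum_mono2 sum_nonneg) auto
  also have "\<dots> \<le> (\<Sum>x\<in>X. (u x)\<^sup>2) * (N * (\<Sum>y\<in>Y. (v y)\<^sup>2))"
    unfolding g_square using assms \<open>N \<ge> 0\<close>
    by (intro mult_left_mono sum_mono2 sum_nonneg) auto
  finally show ?thesis by (simp add: mult.assoc)
qed

definition rectangle_bias ::
    "nat \<Rightarrow> (bool list \<Rightarrow> bool list \<Rightarrow> nat) \<Rightarrow> bool list set \<Rightarrow> bool list set \<Rightarrow> real" where
  "rectangle_bias m f A B = mu_set m ((A \<times> B) \<inter> {p. f (fst p) (snd p) = 0})
                             - mu_set m ((A \<times> B) \<inter> {p. f (fst p) (snd p) = 1})"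

lemma IP_eq_0_or_1: "IP m x y = 0 \<or> IP m x y = 1"
  unfolding IP_def by linarith

lemma rectangle_bias_eq:
  assumes "A \<subseteq> cube m" "B \<subseteq> cube m"
  shows "rectangle_bias m (IP m) A B
         = (\<Sum>x\<in>A. \<Sum>y\<in>B. cube_weight m x * cube_weight m y * ip_sign m x y)"
proof -
  have fin: "finite A" "finite B" using assms finite_cube finite_subset by blast+
  have level_set: "(A \<times> B) \<inter> {p. IP m (fst p) (snd p) = k} \<inter> (cube m \<times> cube m)
        = {p \<in> A \<times> B. IP m (fst p) (snd p) = k}" for k
    using assms by auto
  have "rectangle_bias m (IP m) A B
        = (\<Sum>p\<in>A \<times> B. (if IP m (fst p) (snd p) = 0 then mu m p else 0)
                        - (if IP m (fst p) (snd p) = 1 then mu m p else 0))"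
    unfolding rectangle_bias_def mu_set_def level_set using fin by (simp add: sum.inter_filter sum_subtractf)
  also have "\<dots> = (\<Sum>p\<in>A \<times> B. cube_weight m (fst p) * cube_weight m (snd p) * ip_sign m (fst p) (snd p))"
  proof (rule sum.cong[OF refl])
    fix p :: "bool list \<times> bool list"
    show "(if IP m (fst p) (snd p) = 0 then mu m p else 0) - (if IP m (fst p) (snd p) = 1 then mu m p else 0)
          = cube_weight m (fst p) * cube_weight m (snd p) * ip_sign m (fst p) (snd p)"
      using IP_eq_0_or_1[of m "fst p" "snd p"] mu_eq_cube_weight[of m "fst p" "snd p"]
      by (auto simp: ip_sign_def)
  qed
  finally show ?thesis by (simp add: sum.cartesian_product case_prod_unfold)
qed

lemma rectangle_bias_square_le:
  assumes "A \<subseteq> cube m" "B \<subseteq> cube m"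
  shows "(rectangle_bias m (IP m) A B)\<^sup>2 \<le> (2 * (2 - 2 * sqrt (1/2)) ^ 2) ^ m"
proof -
  have "(\<Sum>x\<in>A. \<Sum>y\<in>B. cube_weight m x * cube_weight m y * ip_sign m x y)\<^sup>2
        \<le> (\<Sum>x\<in>cube m. (cube_weight m x)\<^sup>2) * 2 ^ m * (\<Sum>y\<in>cube m. (cube_weight m y)\<^sup>2)"
    using assms finite_cube by (intro weighted_Lindsey ip_sign_orthogonal) auto
  also have "\<dots> = (2 * (2 - 2 * sqrt (1/2)) ^ 2) ^ m"
    unfolding sum_cube_weight_square by (simp add: power_mult_distrib power2_eq_square mult_ac)
  finally show ?thesis using rectangle_bias_eq[OF assms] by simp
qed

lemma two_mult_square_le_sqrt_half: "2 * (2 - 2 * sqrt (1/2 :: real))\<^sup>2 \<le> sqrt (1/2)"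
proof -
  define p where "p = sqrt (1/2 :: real)"
  have p_square: "p\<^sup>2 = 1/2" unfolding p_def by simp
  have "(12/17)\<^sup>2 \<le> p\<^sup>2" unfolding p_square by (simp add: power2_eq_square)
  then have "12/17 \<le> p" by (rule power2_le_imp_le) (simp add: p_def)
  moreover have "2 * (2 - 2 * p)\<^sup>2 = 12 - 16 * p"
    using p_square by (simp add: power2_eq_square algebra_simps)
  ultimately show ?thesis unfolding p_def[symmetric] by linarith
qed

lemma two_powr_neg_quarter_square: "(2 powr (- real m / 4))\<^sup>2 = sqrt (1/2) ^ m"
proof -
  have "(2 powr (- real m / 4))\<^sup>2 = ((1/2) powr (1/2)) powr real m"
    by (simp add: power2_eq_square powr_add[symmetric] powr_powr powr_minus_divide powr_divide)
  then show ?thesis by (simp add: powr_half_sqrt powr_realpow)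
qed

lemma disc_le:
  assumes "\<And>A B. A \<subseteq> cube m \<Longrightarrow> B \<subseteq> cube m \<Longrightarrow> \<bar>rectangle_bias m f A B\<bar> \<le> b"
  shows "disc m f \<le> b"
proof -
  have biases: "{\<bar>mu_set m ((A \<times> B) \<inter> {p. f (fst p) (snd p) = 0})
                  - mu_set m ((A \<times> B) \<inter> {p. f (fst p) (snd p) = 1})\<bar> | A B. A \<subseteq> cube m \<and> B \<subseteq> cube m}
        = (\<lambda>(A, B). \<bar>rectangle_bias m f A B\<bar>) ` (Pow (cube m) \<times> Pow (cube m))"
    by (auto simp: rectangle_bias_def)
  show ?thesis
    unfolding disc_def biases using assms by (intro Max.boundedI) (auto simp: finite_cube)
qed

theorem lemma6p2:
  shows "\<exists>C::real. \<forall>m::nat. disc m (IP m) \<le> C * 2 powr (- real m / 4)"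
proof (intro exI allI)
  fix m :: nat
  show "disc m (IP m) \<le> 1 * 2 powr (- real m / 4)"
  proof (rule disc_le)
    fix A B assume "A \<subseteq> cube m" "B \<subseteq> cube m"
    then have "\<bar>rectangle_bias m (IP m) A B\<bar>\<^sup>2 \<le> (2 * (2 - 2 * sqrt (1/2)) ^ 2) ^ m"
      unfolding power2_abs by (rule rectangle_bias_square_le)
    also have "\<dots> \<le> sqrt (1/2) ^ m"
      by (intro power_mono two_mult_square_le_sqrt_half) simp
    also have "\<dots> = (1 * 2 powr (- real m / 4))\<^sup>2"
      using two_powr_neg_quarter_square by simp
    finally show "\<bar>rectangle_bias m (IP m) A B\<bar> \<le> 1 * 2 powr (- real m / 4)"
      by (rule power2_le_imp_le) simp
  qed
qed

end
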